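(* $\operatorname{BSR}(4,4)\ge 10$. In particular, the biquadratic form \[P(\mathbf{x},\mathbf{y})=x_1^2y_1^2+x_1^2y_2^2+x_2^2y_1^2+x_2^2y_3^2+x_3^2y_1^2+x_3^2y_4^2+x_4^2y_2^2+x_4^2y_3^2+x_4^2y_4^2+(x_1y_3+x_2y_4)^2\] on $\mathbb{R}^4\times\mathbb{R}^4$ has SOS rank $10$ (i.e., it cannot be written as a sum of fewer than 10 squares of bilinear forms).
   Context: An $m\times n$ biquadratic form is a polynomial $P(\mathbf{x},\mathbf{y})=\sum_{i,k=1}^m\sum_{j,l=1}^n a_{ijkl}x_ix_ky_jy_l$ with real coefficients, $\mathbf{x}\in\mathbb{R}^m$, $\mathbf{y}\in\mathbb{R}^n$. It is SOS if $P=\sum_{p=1}^r f_p^2$ for some real bilinear forms $f_p(\mathbf{x},\mathbf{y})=\sum_{i,j}c^{(p)}_{ij}x_iy_j$; the least such $r$ is the SOS rank $\operatorname{sos}(P)$. $\operatorname{BSR}(m,n)$ is the maximum of $\operatorname{sos}(P)$ over all $m\times n$ SOS biquadratic forms $P$. *)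

theory Defs
  imports Complex_Main
begin

text \<open>Vectors x in R^m and y in R^n are represented as functions nat => real,
  only the coordinates 0..m-1 (resp. 0..n-1) being used.
  Polynomials are identified with the real functions they define (over the reals
  this is injective on polynomials).\<close>

definition biquadratic_form :: "nat \<Rightarrow> nat \<Rightarrow> ((nat \<Rightarrow> real) \<Rightarrow> (nat \<Rightarrow> real) \<Rightarrow> real) \<Rightarrow> bool" where
  "biquadratic_form m n P \<longleftrightarrow>
     (\<exists>a :: nat \<Rightarrow> nat \<Rightarrow> nat \<Rightarrow> nat \<Rightarrow> real. \<forall>x y.
        P x y = (\<Sum>i<m. \<Sum>k<m. \<Sum>j<n. \<Sum>l<n. a i j k l * x i * x k * y j * y l))"

definition bilinear_form :: "nat \<Rightarrow> nat \<Rightarrow> ((nat \<Rightarrow> real) \<Rightarrow> (nat \<Rightarrow> real) \<Rightarrow> real) \<Rightarrow> bool" where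
  "bilinear_form m n f \<longleftrightarrow>
     (\<exists>c :: nat \<Rightarrow> nat \<Rightarrow> real. \<forall>x y. f x y = (\<Sum>i<m. \<Sum>j<n. c i j * x i * y j))"

definition sos_with :: "nat \<Rightarrow> nat \<Rightarrow> ((nat \<Rightarrow> real) \<Rightarrow> (nat \<Rightarrow> real) \<Rightarrow> real) \<Rightarrow> nat \<Rightarrow> bool" where
  "sos_with m n P r \<longleftrightarrow>
     (\<exists>f :: nat \<Rightarrow> (nat \<Rightarrow> real) \<Rightarrow> (nat \<Rightarrow> real) \<Rightarrow> real.
        (\<forall>p<r. bilinear_form m n (f p)) \<and> (\<forall>x y. P x y = (\<Sum>p<r. (f p x y)^2)))"

definition is_sos :: "nat \<Rightarrow> nat \<Rightarrow> ((nat \<Rightarrow> real) \<Rightarrow> (nat \<Rightarrow> real) \<Rightarrow> real) \<Rightarrow> bool" where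
  "is_sos m n P \<longleftrightarrow> (\<exists>r. sos_with m n P r)"

definition sos_rank :: "nat \<Rightarrow> nat \<Rightarrow> ((nat \<Rightarrow> real) \<Rightarrow> (nat \<Rightarrow> real) \<Rightarrow> real) \<Rightarrow> nat" where
  "sos_rank m n P = (LEAST r. sos_with m n P r)"

definition BSR :: "nat \<Rightarrow> nat \<Rightarrow> nat" where
  "BSR m n = Max {sos_rank m n P | P. biquadratic_form m n P \<and> is_sos m n P}"

end

(*
  Write P x y = (SUM p<r. (SUM i j. C p i j * x i * y j)^2) and let v_ij be the vector
  (C p i j)_(p<r) in R^r (indices start at 0).  Polarizing P in x and in y shows that
  <v_ij, v_kl> + <v_il, v_kj> depends on P only, so it can be read off the obvious
  representation of P by ten squares.  For the form of the theorem this gives: v_ij = 0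
  at the five positions where P has no monomial x_i^2 y_j^2; v_13 = v_02, since both are
  unit vectors with inner product 1; and vectors in a common row or column are orthogonal.
  Any other inner product of two of the ten vectors v_00, v_01, v_02, v_10, v_12, v_20,
  v_23, v_31, v_32, v_33 is minus the one of the opposite corners of their rectangle,
  which vanishes by the facts above.  These ten vectors are therefore orthonormal in R^r,
  so r >= 10.  That BSR is a maximum over a finite set follows by completing the square
  in one coefficient at a time: every sum of squares of m x n bilinear forms is a sum
  of at most m n of them.
*)
theory Submission
  imports Defs
begin

definition bilin ::
    "nat \<Rightarrow> nat \<Rightarrow> (nat \<Rightarrow> nat \<Rightarrow> real) \<Rightarrow> (nat \<Rightarrow> real) \<Rightarrow> (nat \<Rightarrow> real) \<Rightarrow> real"
  where
  "bilin m n c x y = (\<Sum>i<m. \<Sum>j<n. c i j * x i * y j)"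

lemma sos_with_iff_coeffs:
  "sos_with m n P r \<longleftrightarrow> (\<exists>C. \<forall>x y. P x y = (\<Sum>p<r. (bilin m n (C p) x y)^2))"
proof
  assume "sos_with m n P r"
  then obtain f where f: "\<forall>p<r. bilinear_form m n (f p)"
    "\<forall>x y. P x y = (\<Sum>p<r. (f p x y)^2)"
    unfolding sos_with_def by blast
  then have "\<forall>p. \<exists>c. p < r \<longrightarrow> (\<forall>x y. f p x y = bilin m n c x y)"
    unfolding bilinear_form_def bilin_def by blast
  then obtain C where "\<And>p x y. p < r \<Longrightarrow> f p x y = bilin m n (C p) x y"
    by metis
  with f(2) show "\<exists>C. \<forall>x y. P x y = (\<Sum>p<r. (bilin m n (C p) x y)^2)"
    by (intro exI[of _ C]) simp
next
  assume "\<exists>C. \<forall>x y. P x y = (\<Sum>p<r. (bilin m n (C p) x y)^2)"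
  then obtain C where "\<forall>x y. P x y = (\<Sum>p<r. (bilin m n (C p) x y)^2)"
    by blast
  then show "sos_with m n P r"
    unfolding sos_with_def bilinear_form_def
    by (intro exI[of _ "\<lambda>p. bilin m n (C p)"]) (auto simp: bilin_def)
qed

definition gram :: "nat \<Rightarrow> ('a \<Rightarrow> nat \<Rightarrow> real) \<Rightarrow> 'a \<Rightarrow> 'a \<Rightarrow> real" where
  "gram r v s t = (\<Sum>p<r. v s p * v t p)"

definition coeffs :: "(nat \<Rightarrow> nat \<Rightarrow> nat \<Rightarrow> real) \<Rightarrow> nat \<times> nat \<Rightarrow> nat \<Rightarrow> real" where
  "coeffs C s p = C p (fst s) (snd s)"

lemma bilin_square:
  "(bilin m n c x y)^2 = (\<Sum>i<m. \<Sum>k<m. \<Sum>j<n. \<Sum>l<n. c i j * c k l * x i * x k * y j * y l)"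
  by (simp add: bilin_def power2_eq_square sum_product mult_ac)

lemma biquadratic_form_if_sos_with:
  assumes "sos_with m n P r"
  shows "biquadratic_form m n P"
proof -
  obtain C where C: "\<forall>x y. P x y = (\<Sum>p<r. (bilin m n (C p) x y)^2)"
    using assms sos_with_iff_coeffs by blast
  have P_eq: "P x y = (\<Sum>i<m. \<Sum>k<m. \<Sum>j<n. \<Sum>l<n.
      gram r (coeffs C) (i, j) (k, l) * x i * x k * y j * y l)" for x y
  proof -
    have "P x y = (\<Sum>p<r. \<Sum>i<m. \<Sum>k<m. \<Sum>j<n. \<Sum>l<n.
        C p i j * C p k l * x i * x k * y j * y l)"
      using C by (simp only: bilin_square)
    also have "\<dots> = (\<Sum>i<m. \<Sum>k<m. \<Sum>j<n. \<Sum>l<n. \<Sum>p<r.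
        C p i j * C p k l * x i * x k * y j * y l)"
      by (subst sum.swap, rule sum.cong[OF refl], subst sum.swap, rule sum.cong[OF refl],
          subst sum.swap, rule sum.cong[OF refl], subst sum.swap, rule refl)
    also have "\<dots> = (\<Sum>i<m. \<Sum>k<m. \<Sum>j<n. \<Sum>l<n.
        gram r (coeffs C) (i, j) (k, l) * x i * x k * y j * y l)"
      by (simp add: gram_def coeffs_def sum_distrib_right)
    finally show ?thesis .
  qed
  show ?thesis
    unfolding biquadratic_form_def
    by (intro exI[of _ "\<lambda>i j k l. gram r (coeffs C) (i, j) (k, l)"] allI) (rule P_eq)
qed

section \<open>Bounding the number of squares\<close>

lemma complete_square:
  fixes F k :: "nat \<Rightarrow> real"
  assumes "a = (\<Sum>p<r. (k p)^2)" "a \<noteq> 0" "S = (\<Sum>p<r. k p * F p)"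
  shows "(\<Sum>p<r. (F p - k p / a * S)^2) + S^2 / a = (\<Sum>p<r. (F p)^2)"
proof -
  have "(\<Sum>p<r. (F p - k p / a * S)^2)
      = (\<Sum>p<r. (F p)^2) - 2 * (S / a) * (\<Sum>p<r. k p * F p) + (S / a)^2 * (\<Sum>p<r. (k p)^2)"
    by (simp add: power2_diff sum.distrib sum_subtractf sum_distrib_left power_mult_distrib
        power_divide algebra_simps sum_divide_distrib)
  also have "\<dots> = (\<Sum>p<r. (F p)^2) - S^2 / a"
    using assms by (simp add: power2_eq_square field_simps)
  finally show ?thesis by simp
qed

lemma sum_squares_eliminate_variable:
  fixes c :: "nat \<Rightarrow> 'a \<Rightarrow> real"
  assumes "finite D" "e \<notin> D"
  obtains g h where "\<And>z. (\<Sum>p<r. (\<Sum>d\<in>insert e D. c p d * z d)^2)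
      = (\<Sum>p<r. (\<Sum>d\<in>D. g p d * z d)^2) + (\<Sum>d\<in>insert e D. h d * z d)^2"
proof -
  define a where "a = (\<Sum>p<r. (c p e)^2)"
  show ?thesis
  proof (cases "a = 0")
    case True
    then have "\<forall>p\<in>{..<r}. (c p e)^2 = 0"
      unfolding a_def by (subst sum_nonneg_eq_0_iff[symmetric]) auto
    then have "c p e = 0" if "p < r" for p
      using that by simp
    then have "(\<Sum>p<r. (\<Sum>d\<in>insert e D. c p d * z d)^2)
        = (\<Sum>p<r. (\<Sum>d\<in>D. c p d * z d)^2) + (\<Sum>d\<in>insert e D. 0 * z d)^2" for z
      using assms by simp
    then show ?thesis
      by (rule that)
  next
    case False
    define h where "h d = (\<Sum>q<r. c q e * c q d)" for d
    define g where "g p d = c p d - c p e / a * h d" for p d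
    have "g p e = 0" for p
      using False by (simp add: g_def h_def a_def power2_eq_square)
    then have g_on_D: "(\<Sum>d\<in>D. g p d * z d) = (\<Sum>d\<in>insert e D. g p d * z d)" for p z
      using assms by simp
    have "(\<Sum>p<r. (\<Sum>d\<in>insert e D. c p d * z d)^2)
        = (\<Sum>p<r. (\<Sum>d\<in>D. g p d * z d)^2) + (\<Sum>d\<in>insert e D. h d / sqrt a * z d)^2" for z
    proof -
      define F where "F p = (\<Sum>d\<in>insert e D. c p d * z d)" for p
      define S where "S = (\<Sum>q<r. c q e * F q)"
      have "(\<Sum>d\<in>insert e D. g p d * z d) = F p - c p e / a * S" for p
        by (simp add: g_def h_def F_def S_def algebra_simps sum_subtractf sum_distrib_left
            sum_distrib_right sum.swap[of _ "insert e D"])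
      moreover have "(\<Sum>d\<in>insert e D. h d / sqrt a * z d)^2 = S^2 / a"
        using False by (simp add: h_def F_def S_def power_divide sum_divide_distrib[symmetric]
            sum_distrib_left sum_distrib_right sum.swap[of _ "insert e D"] mult_ac a_def sum_nonneg)
      ultimately have "(\<Sum>p<r. (\<Sum>d\<in>D. g p d * z d)^2)
          + (\<Sum>d\<in>insert e D. h d / sqrt a * z d)^2
          = (\<Sum>p<r. (F p - c p e / a * S)^2) + S^2 / a"
        by (simp only: g_on_D)
      also have "\<dots> = (\<Sum>p<r. (F p)^2)"
        using a_def False S_def by (rule complete_square)
      finally show ?thesis
        by (simp only: F_def)
    qed
    then show ?thesis
      by (rule that)
  qed
qed

lemma sum_squares_linear_forms_card_bound:
  fixes c :: "nat \<Rightarrow> 'a \<Rightarrow> real"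
  assumes "finite D"
  shows "\<exists>r' c'. r' \<le> card D \<and>
    (\<forall>z. (\<Sum>p<r. (\<Sum>d\<in>D. c p d * z d)^2) = (\<Sum>p<r'. (\<Sum>d\<in>D. c' p d * z d)^2))"
  using assms
proof (induction D arbitrary: r c rule: finite_induct)
  case empty
  show ?case
    by (intro exI[of _ 0]) simp
next
  case (insert e D)
  obtain g h where split: "\<And>z. (\<Sum>p<r. (\<Sum>d\<in>insert e D. c p d * z d)^2)
      = (\<Sum>p<r. (\<Sum>d\<in>D. g p d * z d)^2) + (\<Sum>d\<in>insert e D. h d * z d)^2"
    using sum_squares_eliminate_variable[OF insert.hyps] by blast
  obtain r' c' where r': "r' \<le> card D"
    "\<forall>z. (\<Sum>p<r. (\<Sum>d\<in>D. g p d * z d)^2) = (\<Sum>p<r'. (\<Sum>d\<in>D. c' p d * z d)^2)"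
    using insert.IH by blast
  have extend: "(\<Sum>d\<in>insert e D. ((c' p)(e := 0)) d * z d) = (\<Sum>d\<in>D. c' p d * z d)" for p z
    using insert.hyps by (auto simp: sum.insert intro!: sum.cong)
  define c'' where "c'' p = (if p < r' then (c' p)(e := 0) else h)" for p
  show ?case
  proof (intro exI[of _ "Suc r'"] exI[of _ c''] conjI allI)
    show "Suc r' \<le> card (insert e D)"
      using r'(1) insert.hyps by simp
    fix z
    have "(\<Sum>p<r. (\<Sum>d\<in>insert e D. c p d * z d)^2)
        = (\<Sum>p<r'. (\<Sum>d\<in>insert e D. ((c' p)(e := 0)) d * z d)^2)
          + (\<Sum>d\<in>insert e D. h d * z d)^2"
      using r'(2) by (simp only: extend split)
    also have "\<dots> = (\<Sum>p<Suc r'. (\<Sum>d\<in>insert e D. c'' p d * z d)^2)"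
      unfolding c''_def by (simp del: fun_upd_apply sum.insert)
    finally show "(\<Sum>p<r. (\<Sum>d\<in>insert e D. c p d * z d)^2)
        = (\<Sum>p<Suc r'. (\<Sum>d\<in>insert e D. c'' p d * z d)^2)" .
  qed
qed

lemma bilin_eq_sum_pairs:
  "bilin m n c x y = (\<Sum>(i, j)\<in>{..<m} \<times> {..<n}. c i j * (x i * y j))"
  by (simp add: bilin_def sum.cartesian_product mult.assoc)

lemma sos_with_card_bound:
  assumes "sos_with m n P r"
  shows "\<exists>r'\<le>m * n. sos_with m n P r'"
proof -
  obtain C where C: "\<forall>x y. P x y = (\<Sum>p<r. (bilin m n (C p) x y)^2)"
    using assms sos_with_iff_coeffs by blast
  obtain r' c' where r': "r' \<le> card ({..<m} \<times> {..<n})"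
    "\<forall>z. (\<Sum>p<r. (\<Sum>d\<in>{..<m} \<times> {..<n}. case_prod (C p) d * z d)^2)
       = (\<Sum>p<r'. (\<Sum>d\<in>{..<m} \<times> {..<n}. c' p d * z d)^2)"
    using sum_squares_linear_forms_card_bound[where D="{..<m} \<times> {..<n}" and r=r
        and c="\<lambda>p. case_prod (C p)"]
    by auto
  have P_eq: "P x y = (\<Sum>p<r'. (bilin m n (\<lambda>i j. c' p (i, j)) x y)^2)" for x y
    using C r'(2)[rule_format, of "\<lambda>(i, j). x i * y j"]
    by (simp add: bilin_eq_sum_pairs case_prod_beta')
  have "sos_with m n P r'"
    unfolding sos_with_iff_coeffs by (intro exI[of _ "\<lambda>p i j. c' p (i, j)"] allI) (rule P_eq)
  moreover have "r' \<le> m * n"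
    using r'(1) by simp
  ultimately show ?thesis by blast
qed

lemma sos_rank_le_mult:
  assumes "is_sos m n P"
  shows "sos_rank m n P \<le> m * n"
proof -
  obtain r where "sos_with m n P r"
    using assms unfolding is_sos_def by blast
  then obtain r' where "r' \<le> m * n" "sos_with m n P r'"
    using sos_with_card_bound by blast
  then show ?thesis
    unfolding sos_rank_def by (meson Least_le le_trans)
qed

lemma sos_rank_le_BSR:
  assumes "biquadratic_form m n P" "is_sos m n P"
  shows "sos_rank m n P \<le> BSR m n"
proof -
  let ?A = "{sos_rank m n Q | Q. biquadratic_form m n Q \<and> is_sos m n Q}"
  have "?A \<subseteq> {..m * n}"
    using sos_rank_le_mult by auto
  then have "finite ?A"
    by (rule finite_subset) simp
  moreover have "sos_rank m n P \<in> ?A"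
    using assms by blast
  ultimately show ?thesis
    unfolding BSR_def by (rule Max_ge)
qed

section \<open>Orthonormal families\<close>

lemma gram_commute: "gram r v s t = gram r v t s"
  by (simp add: gram_def mult.commute)

lemma gram_eq_0_if_self_eq_0:
  assumes "gram r v s s = 0"
  shows "gram r v s t = 0"
proof -
  have "\<forall>p\<in>{..<r}. (v s p)^2 = 0"
    using assms by (subst sum_nonneg_eq_0_iff[symmetric]) (simp_all add: gram_def power2_eq_square)
  then show ?thesis
    by (simp add: gram_def)
qed

lemma gram_eq_if_unit_vectors_gram_1:
  assumes "gram r v s s = 1" "gram r v t t = 1" "gram r v s t = 1"
  shows "gram r v s u = gram r v t u"
proof -
  have "(\<Sum>p<r. (v s p - v t p)^2) = gram r v s s - 2 * gram r v s t + gram r v t t"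
    by (simp add: gram_def power2_eq_square algebra_simps sum.distrib sum_subtractf sum_distrib_left)
  then have "\<forall>p\<in>{..<r}. (v s p - v t p)^2 = 0"
    using assms by (subst sum_nonneg_eq_0_iff[symmetric]) auto
  then show ?thesis
    by (simp add: gram_def)
qed

lemma sum_mult_unit_vector:
  fixes f :: "nat \<Rightarrow> real"
  assumes "j < n"
  shows "(\<Sum>b<n. f b * (if b = j then 1 else 0)) = f j"
proof -
  have "(\<Sum>b<n. f b * (if b = j then 1 else 0)) = (\<Sum>b<n. if b = j then f b else 0)"
    by (intro sum.cong) auto
  then show ?thesis
    using assms by simp
qed

lemma bessel_inequality:
  assumes "finite T" and orth: "\<forall>s\<in>T. \<forall>t\<in>T. gram r v s t = (if s = t then 1 else 0)"
  shows "(\<Sum>t\<in>T. (\<Sum>p<r. v t p * z p)^2) \<le> (\<Sum>p<r. (z p)^2)"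
proof -
  define c where "c t = (\<Sum>p<r. v t p * z p)" for t
  define w where "w p = (\<Sum>t\<in>T. c t * v t p)" for p
  have "(\<Sum>p<r. (w p)^2) = (\<Sum>s\<in>T. \<Sum>t\<in>T. c s * c t * gram r v s t)"
    by (simp add: w_def gram_def power2_eq_square sum_product sum_distrib_left
        sum.swap[of _ "{..<r}"] mult_ac)
  also have "\<dots> = (\<Sum>s\<in>T. \<Sum>t\<in>T. if s = t then c s * c t else 0)"
    using orth by (intro sum.cong refl) auto
  also have "\<dots> = (\<Sum>t\<in>T. (c t)^2)"
    using assms(1) by (simp add: power2_eq_square)
  finally have w_norm: "(\<Sum>p<r. (w p)^2) = (\<Sum>t\<in>T. (c t)^2)" .
  have "(\<Sum>p<r. w p * z p) = (\<Sum>p<r. \<Sum>t\<in>T. c t * (v t p * z p))"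
    by (simp add: w_def sum_distrib_right mult.assoc)
  also have "\<dots> = (\<Sum>t\<in>T. (c t)^2)"
    by (subst sum.swap) (simp add: c_def sum_distrib_left[symmetric] power2_eq_square)
  finally have w_z: "(\<Sum>p<r. w p * z p) = (\<Sum>t\<in>T. (c t)^2)" .
  have "0 \<le> (\<Sum>p<r. (z p - w p)^2)"
    by (simp add: sum_nonneg)
  also have "\<dots> = (\<Sum>p<r. (z p)^2) - 2 * (\<Sum>p<r. w p * z p) + (\<Sum>p<r. (w p)^2)"
    by (simp add: power2_diff sum.distrib sum_subtractf sum_distrib_left mult_ac)
  finally show ?thesis
    using w_norm w_z unfolding c_def[symmetric] by linarith
qed

lemma card_le_if_orthonormal:
  assumes "finite T" and orth: "\<forall>s\<in>T. \<forall>t\<in>T. gram r v s t = (if s = t then 1 else 0)"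
  shows "card T \<le> r"
proof -
  have col: "(\<Sum>t\<in>T. (v t p)^2) \<le> 1" if "p < r" for p
    using bessel_inequality[OF assms, of "\<lambda>q. if q = p then 1 else 0"] that
    by (simp add: sum_mult_unit_vector power2_eq_square)
  have "real (card T) = (\<Sum>t\<in>T. gram r v t t)"
    by (simp add: orth)
  also have "\<dots> = (\<Sum>p<r. \<Sum>t\<in>T. (v t p)^2)"
    by (simp add: gram_def power2_eq_square sum.swap[of _ T])
  also have "\<dots> \<le> (\<Sum>p<r. 1)"
    by (intro sum_mono) (simp add: col)
  finally show ?thesis
    by simp
qed

section \<open>Polarization\<close>

lemma bilin_add_left:
  "bilin m n c (\<lambda>a. x a + \<sigma> * x' a) y = bilin m n c x y + \<sigma> * bilin m n c x' y"
  by (simp add: bilin_def algebra_simps sum.distrib sum_distrib_left)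

lemma bilin_add_right:
  "bilin m n c x (\<lambda>b. y b + \<tau> * y' b) = bilin m n c x y + \<tau> * bilin m n c x y'"
  by (simp add: bilin_def algebra_simps sum.distrib sum_distrib_left)

lemma bilin_unit_vectors:
  assumes "i < m" "j < n"
  shows "bilin m n c (\<lambda>a. if a = i then 1 else 0) (\<lambda>b. if b = j then 1 else 0) = c i j"
  unfolding bilin_def using assms by (simp add: sum_mult_unit_vector)

lemma sum_squares_polarization:
  fixes C :: "nat \<Rightarrow> nat \<Rightarrow> nat \<Rightarrow> real" and r m n :: nat
  defines "Q \<equiv> \<lambda>x y. \<Sum>p<r. (bilin m n (C p) x y)^2"
    and "u \<equiv> \<lambda>i k (\<sigma>::real) a. (if a = i then 1 else 0) + \<sigma> * (if a = k then 1 else 0)"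
  assumes "i < m" "k < m" "j < n" "l < n"
  shows "Q (u i k 1) (u j l 1) - Q (u i k 1) (u j l (-1)) - Q (u i k (-1)) (u j l 1)
      + Q (u i k (-1)) (u j l (-1))
    = 8 * (gram r (coeffs C) (i, j) (k, l) + gram r (coeffs C) (i, l) (k, j))"
proof -
  have Q_uu: "Q (u i k \<sigma>) (u j l \<tau>)
      = (\<Sum>p<r. (C p i j + \<tau> * C p i l + \<sigma> * C p k j + \<sigma> * \<tau> * C p k l)^2)"
    for \<sigma> \<tau>
    using assms(3-) by (simp add: Q_def u_def bilin_add_left bilin_add_right bilin_unit_vectors
        algebra_simps)
  have "(a + b + c + d)^2 - (a - b + c - d)^2 - (a + b - c - d)^2 + (a - b - c + d)^2
      = 8 * (a * d + b * c)" for a b c d :: real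
    by (simp add: power2_eq_square algebra_simps)
  then show ?thesis
    by (simp add: Q_uu gram_def coeffs_def sum_subtractf[symmetric] sum.distrib[symmetric]
        sum_distrib_left)
qed

lemma gram_sym_eq_if_same_sum_squares:
  assumes "\<forall>x y. (\<Sum>p<r. (bilin m n (C p) x y)^2) = (\<Sum>q<s. (bilin m n (D q) x y)^2)"
    and "i < m" "k < m" "j < n" "l < n"
  shows "gram r (coeffs C) (i, j) (k, l) + gram r (coeffs C) (i, l) (k, j)
    = gram s (coeffs D) (i, j) (k, l) + gram s (coeffs D) (i, l) (k, j)"
  using sum_squares_polarization[where C=C and r=r, OF assms(2-5)]
    sum_squares_polarization[where C=D and r=s, OF assms(2-5)]
  by (simp add: assms(1))

section \<open>The form of the theorem\<close>

definition P44 :: "(nat \<Rightarrow> real) \<Rightarrow> (nat \<Rightarrow> real) \<Rightarrow> real" where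
  "P44 x y = (x 0)^2 * (y 0)^2 + (x 0)^2 * (y 1)^2 + (x 1)^2 * (y 0)^2
      + (x 1)^2 * (y 2)^2 + (x 2)^2 * (y 0)^2 + (x 2)^2 * (y 3)^2 + (x 3)^2 * (y 1)^2
      + (x 3)^2 * (y 2)^2 + (x 3)^2 * (y 3)^2 + (x 0 * y 2 + x 1 * y 3)^2"

(* The square of the defining representation of P44 in which x i * y j occurs. *)
definition P44_slot :: "nat \<times> nat \<Rightarrow> nat option" where
  "P44_slot = map_of [((0,0), 0), ((0,1), 1), ((1,0), 2), ((1,2), 3), ((2,0), 4), ((2,3), 5),
     ((3,1), 6), ((3,2), 7), ((3,3), 8), ((0,2), 9), ((1,3), 9)]"

definition P44_coeffs :: "nat \<Rightarrow> nat \<Rightarrow> nat \<Rightarrow> real" where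
  "P44_coeffs q i j = (if P44_slot (i, j) = Some q then 1 else 0)"

lemma P44_eq_sum_squares: "P44 x y = (\<Sum>q<10. (bilin 4 4 (P44_coeffs q) x y)^2)"
  by (simp add: P44_def bilin_def P44_coeffs_def P44_slot_def eval_nat_numeral
      power_mult_distrib algebra_simps)

lemma P44_slot_eq:
  assumes "P44_slot s = Some q" "P44_slot t = Some q"
  shows "s = t \<or> {s, t} = {(0,2), (1,3)}"
  using assms unfolding P44_slot_def by (auto split: if_splits)

lemma gram_P44_coeffs:
  "gram 10 (coeffs P44_coeffs) s t
    = (if (s = t \<and> P44_slot s \<noteq> None) \<or> {s, t} = {(0,2), (1,3)} then 1 else 0)"
proof -
  have "gram 10 (coeffs P44_coeffs) s t
      = (if P44_slot s = P44_slot t \<and> P44_slot s \<noteq> None then 1 else 0)"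
  proof (cases "P44_slot s")
    case None
    then show ?thesis
      by (simp add: gram_def coeffs_def P44_coeffs_def)
  next
    case (Some q)
    then have "q < 10"
      unfolding P44_slot_def by (auto split: if_splits)
    have "gram 10 (coeffs P44_coeffs) s t
        = (\<Sum>p<10. if p = q then (if P44_slot t = Some p then 1 else 0) else 0)"
      unfolding gram_def coeffs_def P44_coeffs_def using Some by (intro sum.cong) auto
    then show ?thesis
      using \<open>q < 10\<close> Some by auto
  qed
  moreover have "P44_slot s = P44_slot t \<and> P44_slot s \<noteq> None
      \<longleftrightarrow> (s = t \<and> P44_slot s \<noteq> None) \<or> {s, t} = {(0,2), (1,3)}"
    using P44_slot_eq[of s _ t] by (auto simp: doubleton_eq_iff P44_slot_def)
  ultimately show ?thesis
    by simp
qed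

definition P44_frame :: "(nat \<times> nat) set" where
  "P44_frame = {(0,0), (0,1), (0,2), (1,0), (1,2), (2,0), (2,3), (3,1), (3,2), (3,3)}"

locale P44_sos =
  fixes r :: nat and C :: "nat \<Rightarrow> nat \<Rightarrow> nat \<Rightarrow> real"
  assumes P44_eq: "P44 x y = (\<Sum>p<r. (bilin 4 4 (C p) x y)^2)"
begin

abbreviation G :: "nat \<times> nat \<Rightarrow> nat \<times> nat \<Rightarrow> real" where
  "G \<equiv> gram r (coeffs C)"

lemma G_sym:
  assumes "i < 4" "j < 4" "k < 4" "l < 4"
  shows "G (i, j) (k, l) + G (i, l) (k, j)
    = gram 10 (coeffs P44_coeffs) (i, j) (k, l) + gram 10 (coeffs P44_coeffs) (i, l) (k, j)"
  using P44_eq P44_eq_sum_squares assms by (intro gram_sym_eq_if_same_sum_squares) auto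

lemma G_diag:
  assumes "i < 4" "j < 4"
  shows "G (i, j) (i, j) = (if P44_slot (i, j) = None then 0 else 1)"
  using G_sym[of i j i j] assms by (auto simp: gram_P44_coeffs doubleton_eq_iff split: if_splits)

lemma G_eq_0_if_no_slot:
  assumes "i < 4" "j < 4" "P44_slot (i, j) = None"
  shows "G (i, j) t = 0"
  using G_diag[OF assms(1,2)] assms(3) by (simp add: gram_eq_0_if_self_eq_0)

lemma G_13_eq_G_02: "G (1,3) t = G (0,2) t"
proof -
  have "G (0,2) (1,3) = 1"
    using G_sym[of 0 2 1 3] G_eq_0_if_no_slot[of 0 3 "(1,2)"]
    by (simp add: gram_P44_coeffs doubleton_eq_iff P44_slot_def)
  moreover have "G (0,2) (0,2) = 1" "G (1,3) (1,3) = 1"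
    using G_diag[of 0 2] G_diag[of 1 3] by (simp_all add: P44_slot_def)
  ultimately show ?thesis
    by (metis gram_eq_if_unit_vectors_gram_1)
qed

lemma G_same_row:
  assumes "i < 4" "j < 4" "l < 4" "j \<noteq> l"
  shows "G (i, j) (i, l) = 0"
  using G_sym[of i j i l] assms gram_commute[of r "coeffs C" "(i, l)"]
  by (auto simp: gram_P44_coeffs doubleton_eq_iff split: if_splits)

lemma G_same_col:
  assumes "i < 4" "j < 4" "k < 4" "i \<noteq> k"
  shows "G (i, j) (k, j) = 0"
  using G_sym[of i j k j] assms gram_commute[of r "coeffs C" "(k, j)"]
  by (auto simp: gram_P44_coeffs doubleton_eq_iff split: if_splits)

lemma G_cross:
  assumes "i < 4" "j < 4" "k < 4" "l < 4" "i \<noteq> k" "j \<noteq> l"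
    and "\<not> ({i, k} = {0, 1} \<and> {j, l} = {2, 3})"
  shows "G (i, j) (k, l) = - G (i, l) (k, j)"
  using G_sym[of i j k l] assms by (auto simp: gram_P44_coeffs doubleton_eq_iff split: if_splits)

lemma G_rectangles:
  "G (0,2) (1,0) = 0" "G (0,2) (3,1) = 0" "G (1,3) (2,0) = 0" "G (1,3) (3,2) = 0"
proof -
  show "G (0,2) (1,0) = 0"
    using G_13_eq_G_02[of "(1,0)"] G_same_row[of 1 3 0] by simp
  show "G (0,2) (3,1) = 0"
    using G_cross[of 1 3 3 1] G_13_eq_G_02[of "(3,1)"] G_eq_0_if_no_slot[of 1 1 "(3,3)"]
    by (simp add: doubleton_eq_iff P44_slot_def)
  show "G (1,3) (2,0) = 0"
    using G_13_eq_G_02[of "(2,0)"] G_cross[of 0 2 2 0] G_eq_0_if_no_slot[of 2 2 "(0,0)"]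
      gram_commute[of r "coeffs C" "(0,0)"]
    by (simp add: doubleton_eq_iff P44_slot_def)
  show "G (1,3) (3,2) = 0"
    using G_13_eq_G_02[of "(3,2)"] G_same_col[of 0 2 3] by simp
qed

lemma G_off_diag:
  assumes "s \<in> P44_frame" "t \<in> P44_frame" "s \<noteq> t"
  shows "G s t = 0"
proof -
  define R :: "((nat \<times> nat) \<times> (nat \<times> nat)) set"
    where "R = {((0,2), (1,0)), ((0,2), (3,1)), ((1,3), (2,0)), ((1,3), (3,2))}"
  have rectangle: "G a b = 0" if "(a, b) \<in> R \<or> (b, a) \<in> R" for a b
    using that G_rectangles gram_commute[of r "coeffs C" a b] by (auto simp: R_def)
  obtain i j k l where st: "s = (i, j)" "t = (k, l)"
    by fastforce
  (* A cross inner product is minus the one of the opposite corners (G_cross); these vanish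
     because one corner carries a zero vector, or they form one of the G_rectangles. *)
  have frame: "\<forall>s\<in>P44_frame. \<forall>t\<in>P44_frame. fst s < 4 \<and> snd s < 4 \<and>
      (fst s \<noteq> fst t \<longrightarrow> snd s \<noteq> snd t \<longrightarrow> (s, t) \<in> R \<or> (t, s) \<in> R \<or>
        \<not> ({fst s, fst t} = {0, 1} \<and> {snd s, snd t} = {2, 3}) \<and>
        (P44_slot (fst s, snd t) = None \<or> P44_slot (fst t, snd s) = None \<or>
         ((fst s, snd t), (fst t, snd s)) \<in> R \<or> ((fst t, snd s), (fst s, snd t)) \<in> R))"
    by (simp add: P44_frame_def P44_slot_def R_def doubleton_eq_iff)
  then have bounds: "i < 4" "j < 4" "k < 4" "l < 4"
    using assms st by auto
  have "i \<noteq> k \<Longrightarrow> j \<noteq> l \<Longrightarrow> (s, t) \<in> R \<or> (t, s) \<in> R \<or>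
      \<not> ({i, k} = {0, 1} \<and> {j, l} = {2, 3}) \<and>
      (P44_slot (i, l) = None \<or> P44_slot (k, j) = None \<or>
       ((i, l), (k, j)) \<in> R \<or> ((k, j), (i, l)) \<in> R)"
    using frame[rule_format, OF assms(1,2)] unfolding st by simp
  then consider "i = k" | "j = l" | "(s, t) \<in> R \<or> (t, s) \<in> R"
    | "i \<noteq> k" "j \<noteq> l" "\<not> ({i, k} = {0, 1} \<and> {j, l} = {2, 3})"
      "P44_slot (i, l) = None \<or> P44_slot (k, j) = None \<or>
       ((i, l), (k, j)) \<in> R \<or> ((k, j), (i, l)) \<in> R"
    by blast
  then show ?thesis
  proof cases
    case 4
    then have "G s t = - G (i, l) (k, j)"
      using bounds unfolding st by (intro G_cross)
    also have "G (i, l) (k, j) = 0"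
      using 4 bounds G_eq_0_if_no_slot[of i l] G_eq_0_if_no_slot[of k j]
        gram_commute[of r "coeffs C" "(i, l)"] rectangle by auto
    finally show ?thesis
      by simp
  qed (use assms st bounds G_same_row G_same_col rectangle in auto)
qed

lemma G_frame_orthonormal:
  "\<forall>s\<in>P44_frame. \<forall>t\<in>P44_frame. G s t = (if s = t then 1 else 0)"
proof -
  have "\<forall>(i, j)\<in>P44_frame. i < 4 \<and> j < 4 \<and> P44_slot (i, j) \<noteq> None"
    by (simp add: P44_frame_def P44_slot_def)
  then show ?thesis
    using G_off_diag G_diag by fastforce
qed

lemma length_ge_10: "10 \<le> r"
proof -
  have "card P44_frame \<le> r"
    using G_frame_orthonormal by (intro card_le_if_orthonormal) (auto simp: P44_frame_def)
  then show ?thesis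
    by (simp add: P44_frame_def)
qed

end

lemma sos_with_P44_ge_10:
  assumes "sos_with 4 4 P44 r"
  shows "10 \<le> r"
proof -
  obtain C where "\<forall>x y. P44 x y = (\<Sum>p<r. (bilin 4 4 (C p) x y)^2)"
    using assms sos_with_iff_coeffs by blast
  then interpret P44_sos r C
    by unfold_locales blast
  show ?thesis
    by (rule length_ge_10)
qed

theorem corollary3p2:
  fixes P :: "(nat \<Rightarrow> real) \<Rightarrow> (nat \<Rightarrow> real) \<Rightarrow> real"
  assumes "P = (\<lambda>x y. (x 0)^2 * (y 0)^2 + (x 0)^2 * (y 1)^2 + (x 1)^2 * (y 0)^2
      + (x 1)^2 * (y 2)^2 + (x 2)^2 * (y 0)^2 + (x 2)^2 * (y 3)^2 + (x 3)^2 * (y 1)^2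
      + (x 3)^2 * (y 2)^2 + (x 3)^2 * (y 3)^2 + (x 0 * y 2 + x 1 * y 3)^2)"
  shows "biquadratic_form 4 4 P \<and> is_sos 4 4 P \<and> sos_rank 4 4 P = 10 \<and> BSR 4 4 \<ge> 10"
proof -
  have P: "P = P44"
    unfolding assms by (simp add: fun_eq_iff P44_def)
  have sos10: "sos_with 4 4 P44 10"
    unfolding sos_with_iff_coeffs using P44_eq_sum_squares by blast
  have biq: "biquadratic_form 4 4 P44"
    using sos10 by (rule biquadratic_form_if_sos_with)
  have sos: "is_sos 4 4 P44"
    using sos10 unfolding is_sos_def by blast
  have rank: "sos_rank 4 4 P44 = 10"
    unfolding sos_rank_def using sos10 sos_with_P44_ge_10 by (rule Least_equality)
  show ?thesis
    unfolding P using biq sos rank sos_rank_le_BSR[OF biq sos] by simp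
qed

end
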